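(* Let $k\ge 3$ and let $T$ be a tree with $|V(T)|=n$ that admits a $(3,k-2)$-completion set, and let $\mathrm{OPT}$ be the size of a minimum $(3,k-2)$-completion set of $T$. Then $(n-1)\cdot\frac{k-2}{2}\le \mathrm{OPT}$.
   Context: A connected graph $H$ has a $(3,\ell)$-cover if every edge of $H$ is contained in at least $\ell$ triangles. For a connected graph $G=(V,E)$, a set $E'\subseteq (V\times V)\setminus E$ of non-edges is a $(3,\ell)$-completion set of $G$ if $G\cup E'$ has a $(3,\ell)$-cover. *)

theory Defs
  imports Complex_Main
begin

definition all_pairs :: "'a set \<Rightarrow> 'a set set" where
  "all_pairs V = {{u, v} | u v. u \<in> V \<and> v \<in> V \<and> u \<noteq> v}"

definition ugraph :: "'a set \<Rightarrow> 'a set set \<Rightarrow> bool" where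
  "ugraph V E \<longleftrightarrow> finite V \<and> E \<subseteq> all_pairs V"

definition graph_connected :: "'a set \<Rightarrow> 'a set set \<Rightarrow> bool" where
  "graph_connected V E \<longleftrightarrow>
     (\<forall>u\<in>V. \<forall>v\<in>V. (u, v) \<in> {(x, y). {x, y} \<in> E}\<^sup>*)"

definition is_cycle :: "'a set \<Rightarrow> 'a set set \<Rightarrow> 'a list \<Rightarrow> bool" where
  "is_cycle V E xs \<longleftrightarrow> distinct xs \<and> length xs \<ge> 3 \<and> set xs \<subseteq> V \<and>
     (\<forall>i < length xs. {xs ! i, xs ! ((i + 1) mod length xs)} \<in> E)"

definition is_tree :: "'a set \<Rightarrow> 'a set set \<Rightarrow> bool" where
  "is_tree V E \<longleftrightarrow> ugraph V E \<and> V \<noteq> {} \<and> graph_connected V E \<and>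
     \<not> (\<exists>xs. is_cycle V E xs)"

definition triangles_on :: "'a set \<Rightarrow> 'a set set \<Rightarrow> 'a \<Rightarrow> 'a \<Rightarrow> nat" where
  "triangles_on V E u v = card {w \<in> V. {u, w} \<in> E \<and> {v, w} \<in> E}"

definition has_3_cover :: "'a set \<Rightarrow> 'a set set \<Rightarrow> nat \<Rightarrow> bool" where
  "has_3_cover V E l \<longleftrightarrow> graph_connected V E \<and>
     (\<forall>u v. {u, v} \<in> E \<longrightarrow> triangles_on V E u v \<ge> l)"

definition completion_set :: "'a set \<Rightarrow> 'a set set \<Rightarrow> nat \<Rightarrow> 'a set set \<Rightarrow> bool" where
  "completion_set V E l E' \<longleftrightarrow> E' \<subseteq> all_pairs V - E \<and> has_3_cover V (E \<union> E') l"

definition opt_completion :: "'a set \<Rightarrow> 'a set set \<Rightarrow> nat \<Rightarrow> nat" where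
  "opt_completion V E l = Min (card ` {E'. completion_set V E l E'})"

end

theory Submission
  imports Defs "HOL-Library.Transitive_Closure_Table"
begin

text \<open>
  Let G be the tree E completed by the new edges E'. For a tree edge e and a triangle on e with
  apex w, removing e disconnects w from one endpoint x of e in the tree, so {x, w} is a new edge.
  The ordered pair (x, w) determines e, as the only tree edge at x whose removal separates x
  from w. A tree has n - 1 edges, each on at least k - 2 triangles, so at least (n - 1)(k - 2)
  pairs (e, w) inject into the 2 |E'| ordered pairs of new edges.
\<close>

definition adj :: "'a set set \<Rightarrow> 'a \<Rightarrow> 'a \<Rightarrow> bool" where
  "adj F x y \<longleftrightarrow> {x, y} \<in> F"

lemma adj_commute: "adj F x y \<longleftrightarrow> adj F y x"
  by (simp add: adj_def insert_commute)

lemma rtranclp_adj_sym: "(adj F)\<^sup>*\<^sup>* x y \<Longrightarrow> (adj F)\<^sup>*\<^sup>* y x"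
  by (metis adj_commute sympD sympI symp_rtranclp)

lemma rtranclp_adj_mono: "F \<subseteq> F' \<Longrightarrow> (adj F)\<^sup>*\<^sup>* x y \<Longrightarrow> (adj F')\<^sup>*\<^sup>* x y"
  by (metis adj_def predicate2I rtranclp_mono subsetD predicate2D)

lemma graph_connected_iff_adj:
  "graph_connected V E \<longleftrightarrow> (\<forall>u\<in>V. \<forall>v\<in>V. (adj E)\<^sup>*\<^sup>* u v)"
  unfolding graph_connected_def adj_def[abs_def] by (simp add: rtranclp_rtrancl_eq[symmetric])

lemma doubleton_in_all_pairs_iff: "{u, v} \<in> all_pairs V \<longleftrightarrow> u \<noteq> v \<and> u \<in> V \<and> v \<in> V"
  by (auto simp: all_pairs_def doubleton_eq_iff)

lemma in_all_pairsE:
  assumes "e \<in> all_pairs V"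
  obtains u v where "e = {u, v}" "u \<noteq> v" "u \<in> V" "v \<in> V"
  using assms by (auto simp: all_pairs_def)

lemma finite_all_pairs: "finite V \<Longrightarrow> finite (all_pairs V)"
  by (rule finite_subset[of _ "Pow V"]) (auto simp: all_pairs_def)

lemma rtranclp_adj_Diff_edge_source:
  assumes "(adj F)\<^sup>*\<^sup>* a b"
  shows "(adj (F - {e}))\<^sup>*\<^sup>* a b \<or> (\<exists>z\<in>e. (adj (F - {e}))\<^sup>*\<^sup>* a z)"
  using assms
proof (induction rule: rtranclp_induct)
  case (step b c)
  then show ?case
    by (cases "{b, c} = e") (auto simp: adj_def intro: rtranclp.rtrancl_into_rtrancl)
qed simp

lemma rtranclp_adj_Diff_edge_target:
  assumes "(adj F)\<^sup>*\<^sup>* a b"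
  shows "(adj (F - {e}))\<^sup>*\<^sup>* a b \<or> (\<exists>z\<in>e. (adj (F - {e}))\<^sup>*\<^sup>* z b)"
  using rtranclp_adj_Diff_edge_source[OF rtranclp_adj_sym[OF assms], of e]
  by (auto intro: rtranclp_adj_sym)

lemma rtranclp_adj_edge_endpoint: "{x, y} \<in> F \<Longrightarrow> z \<in> {x, y} \<Longrightarrow> (adj F)\<^sup>*\<^sup>* z x"
  by (auto simp: adj_def insert_commute)

lemma rtrancl_path_adj_Diff_edge:
  "rtrancl_path (adj F) a p b \<Longrightarrow> x \<notin> set (a # p) \<Longrightarrow> x \<in> e \<Longrightarrow>
    rtrancl_path (adj (F - {e})) a p b"
  by (induction rule: rtrancl_path.induct) (auto simp: adj_def intro: rtrancl_path.intros)

lemma is_cycle_close_path: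
  assumes E: "E \<subseteq> all_pairs V" and p: "rtrancl_path (adj E) u p v"
    and "distinct (u # p)" and "2 \<le> length p" and vu: "{v, u} \<in> E"
  shows "is_cycle V E (u # p)"
proof -
  have "{(u # p) ! i, (u # p) ! ((i + 1) mod length (u # p))} \<in> E" if "i < length (u # p)" for i
  proof (cases "i < length p")
    case True
    then show ?thesis using rtrancl_path_nth[OF p True] by (simp add: adj_def)
  next
    case False
    with that have "i = length p" by simp
    then show ?thesis
      using vu rtrancl_path_last[OF p] \<open>2 \<le> length p\<close> by (auto simp: last_conv_nth nth_Cons')
  qed
  moreover have "set (u # p) \<subseteq> V"
    using vu p E rtrancl_path_Range by (fastforce simp: adj_def doubleton_in_all_pairs_iff)
  ultimately show ?thesis
    using assms by (simp add: is_cycle_def)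
qed

lemma is_tree_edges: "is_tree V E \<Longrightarrow> E \<subseteq> all_pairs V"
  by (simp add: is_tree_def ugraph_def)

lemma is_tree_finite:
  assumes "is_tree V E"
  shows "finite V" "finite E"
proof -
  show "finite V"
    using assms by (simp add: is_tree_def ugraph_def)
  then show "finite E"
    using is_tree_edges[OF assms] finite_all_pairs finite_subset by blast
qed

lemma tree_connected: "is_tree V E \<Longrightarrow> u \<in> V \<Longrightarrow> v \<in> V \<Longrightarrow> (adj E)\<^sup>*\<^sup>* u v"
  by (simp add: is_tree_def graph_connected_iff_adj)

lemma tree_edge_at_vertex:
  assumes "is_tree V E" and "e \<in> E" and "x \<in> e"
  obtains y where "e = {x, y}" "x \<noteq> y"
proof -
  have "e \<in> all_pairs V"
    using is_tree_edges[OF assms(1)] assms(2) ..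
  then show thesis
    using that assms(3) by (auto elim!: in_all_pairsE simp: insert_commute)
qed

lemma tree_edge_separates:
  assumes tree: "is_tree V E" and uv: "{u, v} \<in> E"
  shows "\<not> (adj (E - {{u, v}}))\<^sup>*\<^sup>* u v"
proof
  assume "(adj (E - {{u, v}}))\<^sup>*\<^sup>* u v"
  then obtain p where p: "rtrancl_path (adj (E - {{u, v}})) u p v" and dist: "distinct (u # p)"
    by (meson rtranclp_eq_rtrancl_path rtrancl_path_distinct)
  have E: "E \<subseteq> all_pairs V"
    using tree by (rule is_tree_edges)
  with uv have "u \<noteq> v"
    by (metis doubleton_in_all_pairs_iff subsetD)
  have "2 \<le> length p"
  proof (rule ccontr)
    assume "\<not> 2 \<le> length p"
    then consider "p = []" | w where "p = [w]"
      by (cases p) (auto simp: Suc_le_eq)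
    then show False
      using p \<open>u \<noteq> v\<close> by cases (auto elim!: rtrancl_path.cases simp: adj_def)
  qed
  moreover have "rtrancl_path (adj E) u p v"
    using p by (rule rtrancl_path_mono) (simp add: adj_def)
  ultimately have "is_cycle V E (u # p)"
    using is_cycle_close_path[OF E _ dist] uv by (simp add: insert_commute)
  then show False
    using tree by (simp add: is_tree_def)
qed

definition cuts_off :: "'a set set \<Rightarrow> 'a set \<Rightarrow> 'a \<Rightarrow> 'a \<Rightarrow> bool" where
  "cuts_off F e x w \<longleftrightarrow> x \<in> e \<and> \<not> (adj (F - {e}))\<^sup>*\<^sup>* x w"

lemma cuts_off_other_endpoint:
  assumes "(adj F)\<^sup>*\<^sup>* x w" and "cuts_off F {x, y} x w"
  shows "(adj (F - {{x, y}}))\<^sup>*\<^sup>* y w"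
  using rtranclp_adj_Diff_edge_target[OF assms(1), of "{x, y}"] assms(2)
  by (auto simp: cuts_off_def)

lemma tree_edge_cuts_off_endpoint:
  assumes tree: "is_tree V E" and "e \<in> E"
  shows "\<exists>x. cuts_off E e x w"
proof (rule ccontr)
  assume none: "\<nexists>x. cuts_off E e x w"
  have "e \<in> all_pairs V"
    using is_tree_edges[OF tree] \<open>e \<in> E\<close> ..
  then obtain u v where e: "e = {u, v}"
    by (rule in_all_pairsE)
  with none have "(adj (E - {e}))\<^sup>*\<^sup>* u w" "(adj (E - {e}))\<^sup>*\<^sup>* v w"
    by (auto simp: cuts_off_def)
  then have "(adj (E - {e}))\<^sup>*\<^sup>* u v"
    by (meson rtranclp_adj_sym rtranclp_trans)
  then show False
    using tree_edge_separates[OF tree] \<open>e \<in> E\<close> e by blast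
qed

lemma tree_cuts_off_edge_exists:
  assumes tree: "is_tree V E" and "x \<in> V" "w \<in> V" "x \<noteq> w"
  obtains e where "e \<in> E" "cuts_off E e x w"
proof -
  obtain p where p: "rtrancl_path (adj E) x p w" and dist: "distinct (x # p)"
    using tree_connected[OF tree \<open>x \<in> V\<close> \<open>w \<in> V\<close>]
    by (meson rtranclp_eq_rtrancl_path rtrancl_path_distinct)
  then obtain y q where pq: "p = y # q" and xy: "{x, y} \<in> E" and q: "rtrancl_path (adj E) y q w"
    using \<open>x \<noteq> w\<close> by (auto elim: rtrancl_path.cases simp: adj_def)
  have "rtrancl_path (adj (E - {{x, y}})) y q w"
    using rtrancl_path_adj_Diff_edge[OF q, of x] dist pq by simp
  then have "(adj (E - {{x, y}}))\<^sup>*\<^sup>* y w"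
    by (auto simp: rtranclp_eq_rtrancl_path)
  then have "\<not> (adj (E - {{x, y}}))\<^sup>*\<^sup>* x w"
    using tree_edge_separates[OF tree xy] by (meson rtranclp_adj_sym rtranclp_trans)
  then show thesis
    using xy by (intro that) (auto simp: cuts_off_def)
qed

lemma tree_cuts_off_unique:
  assumes tree: "is_tree V E" and "x \<in> V" "w \<in> V"
    and e1: "e1 \<in> E" "cuts_off E e1 x w" and e2: "e2 \<in> E" "cuts_off E e2 x w"
  shows "e1 = e2"
proof (rule ccontr)
  assume "e1 \<noteq> e2"
  have "x \<in> e1" "x \<in> e2"
    using e1(2) e2(2) by (simp_all add: cuts_off_def)
  obtain y1 where y1: "e1 = {x, y1}"
    using tree_edge_at_vertex[OF tree e1(1) \<open>x \<in> e1\<close>] by blast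
  obtain y2 where y2: "e2 = {x, y2}"
    using tree_edge_at_vertex[OF tree e2(1) \<open>x \<in> e2\<close>] by blast
  let ?F = "E - {e1}"
  have "(adj ?F)\<^sup>*\<^sup>* y1 w"
    using cuts_off_other_endpoint[OF tree_connected[OF tree \<open>x \<in> V\<close> \<open>w \<in> V\<close>]] e1(2) y1
    by simp
  then consider "(adj (?F - {e2}))\<^sup>*\<^sup>* y1 w" | z where "z \<in> e2" "(adj (?F - {e2}))\<^sup>*\<^sup>* y1 z"
    using rtranclp_adj_Diff_edge_source[of ?F y1 w e2] by blast
  then show False
  proof cases
    case 1
    have "adj (E - {e2}) x y1"
      using e1(1) y1 \<open>e1 \<noteq> e2\<close> by (simp add: adj_def)
    moreover have "(adj (E - {e2}))\<^sup>*\<^sup>* y1 w"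
      using 1 by (rule rtranclp_adj_mono[rotated]) blast
    ultimately have "(adj (E - {e2}))\<^sup>*\<^sup>* x w"
      by (rule converse_rtranclp_into_rtranclp)
    then show False
      using e2(2) by (simp add: cuts_off_def)
  next
    case (2 z)
    have "(adj ?F)\<^sup>*\<^sup>* y1 z"
      using 2(2) by (rule rtranclp_adj_mono[rotated]) blast
    moreover have "(adj ?F)\<^sup>*\<^sup>* z x"
      using rtranclp_adj_edge_endpoint[of x y2 ?F z] 2(1) e2(1) y2 \<open>e1 \<noteq> e2\<close> by simp
    ultimately have "(adj ?F)\<^sup>*\<^sup>* x y1"
      by (meson rtranclp_adj_sym rtranclp_trans)
    then show False
      using tree_edge_separates[OF tree] e1(1) y1 by blast
  qed
qed

lemma tree_card_edges_ge:
  assumes tree: "is_tree V E"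
  shows "card V - 1 \<le> card E"
proof -
  obtain r where r: "r \<in> V"
    using tree by (auto simp: is_tree_def)
  define toward where "toward v = (SOME e. e \<in> E \<and> cuts_off E e v r)" for v
  have toward: "toward v \<in> E \<and> cuts_off E (toward v) v r" if "v \<in> V - {r}" for v
  proof -
    have "\<exists>e. e \<in> E \<and> cuts_off E e v r"
      using tree_cuts_off_edge_exists[OF tree _ r, of v] that by blast
    then show ?thesis
      unfolding toward_def by (rule someI_ex)
  qed
  have "inj_on toward (V - {r})"
  proof (rule inj_onI, rule ccontr)
    fix u v
    assume u: "u \<in> V - {r}" and v: "v \<in> V - {r}" and eq: "toward u = toward v" and "u \<noteq> v"
    have "u \<in> toward u" "v \<in> toward u"
      using toward[OF u] toward[OF v] eq by (simp_all add: cuts_off_def)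
    then obtain y where "toward u = {u, y}"
      using tree_edge_at_vertex[OF tree] toward[OF u] by blast
    with \<open>v \<in> toward u\<close> \<open>u \<noteq> v\<close> have uv: "toward u = {u, v}"
      by auto
    then have "(adj (E - {{u, v}}))\<^sup>*\<^sup>* v r"
      using cuts_off_other_endpoint[OF tree_connected[OF tree _ r]] u toward[OF u] by auto
    then show False
      using toward[OF v] eq uv by (simp add: cuts_off_def)
  qed
  moreover have "toward ` (V - {r}) \<subseteq> E"
    using toward by blast
  moreover have "finite E"
    using tree by (rule is_tree_finite)
  ultimately have "card (V - {r}) \<le> card E"
    by (rule card_inj_on_le)
  then show ?thesis
    using r by simp
qed

lemma card_ordered_pairs_le:
  assumes "finite F"
  shows "card {(a, b). {a, b} \<in> F} \<le> 2 * card F"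
proof -
  define S where "S f = {(a, b). {a, b} = f}" for f :: "'a set"
  have S: "finite (S f) \<and> card (S f) \<le> 2" for f
  proof (cases "S f = {}")
    case False
    then obtain u v where "f = {u, v}"
      by (auto simp: S_def)
    then have "S f \<subseteq> {(u, v), (v, u)}"
      by (auto simp: S_def doubleton_eq_iff)
    moreover have "card {(u, v), (v, u)} \<le> 2"
      by (rule card_insert_le_m1) auto
    ultimately show ?thesis
      by (meson card_mono finite.emptyI finite.insertI finite_subset order_trans)
  qed simp
  have "card {(a, b). {a, b} \<in> F} = card (\<Union>f\<in>F. S f)"
    by (rule arg_cong[where f = card]) (auto simp: S_def)
  also have "\<dots> \<le> (\<Sum>f\<in>F. card (S f))"
    using assms by (rule card_UN_le)
  also have "\<dots> \<le> 2 * card F"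
    using sum_mono[of F "\<lambda>f. card (S f)" "\<lambda>_. 2"] S by simp
  finally show ?thesis .
qed

definition common_neighbours :: "'a set \<Rightarrow> 'a set set \<Rightarrow> 'a set \<Rightarrow> 'a set" where
  "common_neighbours V G e = {w \<in> V. \<forall>x\<in>e. {x, w} \<in> G}"

lemma card_common_neighbours_doubleton:
  "card (common_neighbours V G {u, v}) = triangles_on V G u v"
  by (simp add: common_neighbours_def triangles_on_def)

lemma cuts_off_common_neighbour_new_edge:
  assumes G: "G \<subseteq> all_pairs V" and w: "w \<in> common_neighbours V G e" and x: "cuts_off E e x w"
  shows "{x, w} \<in> G - E"
proof -
  have nbr: "\<forall>z\<in>e. {z, w} \<in> G"
    using w by (simp add: common_neighbours_def)
  with x have "{x, w} \<in> G"
    by (simp add: cuts_off_def)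
  moreover have "{x, w} \<notin> E"
  proof
    assume "{x, w} \<in> E"
    have "w \<notin> e"
      using nbr G doubleton_in_all_pairs_iff[of w w V] by auto
    with \<open>{x, w} \<in> E\<close> have "adj (E - {e}) x w"
      by (auto simp: adj_def)
    with x show False
      by (simp add: cuts_off_def r_into_rtranclp)
  qed
  ultimately show ?thesis
    by simp
qed

lemma tree_triangles_card_le:
  assumes tree: "is_tree V E" and G: "G \<subseteq> all_pairs V"
  shows "card (Sigma E (common_neighbours V G)) \<le> card {(x, w). {x, w} \<in> G - E}"
proof -
  define far where "far e w = (SOME x. cuts_off E e x w)" for e w
  have far: "cuts_off E e (far e w) w" if "e \<in> E" for e w
    unfolding far_def using tree_edge_cuts_off_endpoint[OF tree that] by (rule someI_ex)
  have "inj_on (\<lambda>(e, w). (far e w, w)) (Sigma E (common_neighbours V G))"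
  proof (rule inj_onI, clarsimp)
    fix e1 e2 w
    assume "e1 \<in> E" "e2 \<in> E" "w \<in> common_neighbours V G e1" and eq: "far e1 w = far e2 w"
    have "far e1 w \<in> V"
      using far[OF \<open>e1 \<in> E\<close>, of w] is_tree_edges[OF tree] \<open>e1 \<in> E\<close>
      by (auto simp: cuts_off_def all_pairs_def)
    moreover have "w \<in> V"
      using \<open>w \<in> common_neighbours V G e1\<close> by (simp add: common_neighbours_def)
    ultimately show "e1 = e2"
      using tree_cuts_off_unique[OF tree _ _ \<open>e1 \<in> E\<close> far[OF \<open>e1 \<in> E\<close>, of w] \<open>e2 \<in> E\<close>]
        far[OF \<open>e2 \<in> E\<close>, of w] eq by simp
  qed
  moreover have "(\<lambda>(e, w). (far e w, w)) ` Sigma E (common_neighbours V G) \<subseteq> {(x, w). {x, w} \<in> G - E}"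
  proof clarify
    fix e w
    assume "e \<in> E" "w \<in> common_neighbours V G e"
    then show "{far e w, w} \<in> G - E"
      using cuts_off_common_neighbour_new_edge[OF G _ far] by blast
  qed
  moreover have "finite {(x, w). {x, w} \<in> G - E}"
  proof (rule finite_subset)
    show "{(x, w). {x, w} \<in> G - E} \<subseteq> V \<times> V"
      using G by (auto simp: doubleton_in_all_pairs_iff dest!: subsetD)
    show "finite (V \<times> V)"
      using is_tree_finite[OF tree] by simp
  qed
  ultimately show ?thesis
    by (rule card_inj_on_le)
qed

lemma tree_completion_set_card_ge:
  assumes tree: "is_tree V E" and E': "completion_set V E l E'"
  shows "(card V - 1) * l \<le> 2 * card E'"
proof -
  let ?G = "E \<union> E'"
  have E'_new: "E' \<subseteq> all_pairs V" "E' \<inter> E = {}"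
    using E' by (auto simp: completion_set_def)
  have cover: "l \<le> triangles_on V ?G u v" if "{u, v} \<in> ?G" for u v
    using E' that unfolding completion_set_def has_3_cover_def by blast
  have fin: "finite V" "finite E" "finite E'"
    using is_tree_finite[OF tree] finite_subset[OF E'_new(1) finite_all_pairs] by auto
  have "(card V - 1) * l \<le> card E * l"
    using tree_card_edges_ge[OF tree] by simp
  also have "\<dots> \<le> (\<Sum>e\<in>E. card (common_neighbours V ?G e))"
  proof -
    have "l \<le> card (common_neighbours V ?G e)" if "e \<in> E" for e
    proof -
      have "e \<in> all_pairs V"
        using is_tree_edges[OF tree] \<open>e \<in> E\<close> ..
      then obtain u v where "e = {u, v}"
        by (rule in_all_pairsE)
      then show ?thesis
        using cover \<open>e \<in> E\<close> by (simp add: card_common_neighbours_doubleton)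
    qed
    then show ?thesis
      using sum_mono[of E "\<lambda>_. l"] by simp
  qed
  also have "\<dots> = card (Sigma E (common_neighbours V ?G))"
    using fin by (simp add: common_neighbours_def)
  also have "\<dots> \<le> card {(x, w). {x, w} \<in> ?G - E}"
    using tree_triangles_card_le[OF tree, of ?G] is_tree_edges[OF tree] E'_new(1) by simp
  also have "\<dots> \<le> 2 * card E'"
    using card_ordered_pairs_le[OF fin(3)] E'_new(2) by (simp add: Un_Diff Int_commute Diff_triv)
  finally show ?thesis .
qed

lemma opt_completion_attained:
  assumes "finite V" and "\<exists>E'. completion_set V E l E'"
  obtains E' where "completion_set V E l E'" "card E' = opt_completion V E l"
proof -
  have "{E'. completion_set V E l E'} \<subseteq> Pow (all_pairs V)"
    by (auto simp: completion_set_def)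
  then have "finite (card ` {E'. completion_set V E l E'})"
    using finite_all_pairs[OF assms(1)] by (meson finite_Pow_iff finite_imageI finite_subset)
  then have "opt_completion V E l \<in> card ` {E'. completion_set V E l E'}"
    using assms(2) unfolding opt_completion_def by (intro Min_in) auto
  then obtain E' where "completion_set V E l E'" "opt_completion V E l = card E'"
    by blast
  with that show thesis
    by simp
qed

theorem corollary1:
  fixes V :: "'a set" and E :: "'a set set" and k :: nat
  assumes "k \<ge> 3"
    and "is_tree V E"
    and "\<exists>E'. completion_set V E (k - 2) E'"
  shows "(real (card V) - 1) * ((real k - 2) / 2) \<le> real (opt_completion V E (k - 2))"
proof -
  have "finite V" "V \<noteq> {}"
    using assms(2) by (auto simp: is_tree_def ugraph_def)
  then have "card V \<ge> 1"
    by (simp add: Suc_leI card_gt_0_iff)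
  obtain E' where "completion_set V E (k - 2) E'" and opt: "card E' = opt_completion V E (k - 2)"
    using opt_completion_attained[OF \<open>finite V\<close> assms(3)] .
  then have "(card V - 1) * (k - 2) \<le> 2 * card E'"
    using tree_completion_set_card_ge[OF assms(2)] by blast
  then have "real ((card V - 1) * (k - 2)) \<le> real (2 * card E')"
    by (simp only: of_nat_le_iff)
  then have "(real (card V) - 1) * (real k - 2) \<le> 2 * real (card E')"
    using \<open>card V \<ge> 1\<close> assms(1) by (simp add: of_nat_diff)
  then show ?thesis
    using opt by simp
qed

end
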